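(* In the one-dimensional perturbed elephant random walk with stops, suppose $\epsilon+r\neq1$ and $\gamma=\frac{1-\epsilon r}{2}$. Then for all $t\ge1$ $$\mathbb{E}[X_t^2]=\frac{t}{r(\epsilon+r)}-\frac{r\,\Gamma(t+1-\epsilon-r)}{(\epsilon+r)(\epsilon+r-\epsilon r)\Gamma(1-\epsilon-r)\Gamma(t)}-\frac{1}{\Gamma(1-\epsilon r)}\Big[\frac{1}{r(\epsilon+r)}-\frac{r}{(\epsilon+r)(\epsilon+r-\epsilon r)}\Big]\frac{\Gamma(t+1-\epsilon r)}{\Gamma(t)},$$ and hence $\displaystyle\lim_{t\to\infty}\frac{\mathbb{E}[X_t^2]}{t}=\frac{1}{r(\epsilon+r)}$.
   Context: One-dimensional perturbed elephant random walk with stops (perturbed ERWS): fix $p,q,r\in(0,1)$ with $p+q+r=1$, $\epsilon\in(0,1)$ and $s\in(0,1)$, and set $\gamma=p-q$. The steps $\sigma_1,\sigma_2,\dots$ take values in $\{-1,0,1\}$, $X_0=0$ and $X_t=\sigma_1+\dots+\sigma_t$. The first step satisfies $P(\sigma_1=1)=s$, $P(\sigma_1=-1)=1-s$. For $t\ge1$, conditionally on $\sigma_1,\dots,\sigma_t$, an index $k\in\{1,\dots,t\}$ is chosen uniformly at random. If $\sigma_k=\pm1$, then $\sigma_{t+1}=\sigma_k$ with probability $p$, $\sigma_{t+1}=-\sigma_k$ with probability $q$, and $\sigma_{t+1}=0$ with probability $r$. If $\sigma_k=0$, then $\sigma_{t+1}=1$ with probability $\epsilon/2$, $\sigma_{t+1}=-1$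 with probability $\epsilon/2$, and $\sigma_{t+1}=0$ with probability $1-\epsilon$. *)

theory Defs
  imports "HOL-Analysis.Analysis" "HOL-Probability.Probability"
begin

definition erws_first :: "real \<Rightarrow> int pmf" where
  "erws_first s = pmf_of_list [(1, s), (-1, 1 - s)]"

definition erws_next :: "real \<Rightarrow> real \<Rightarrow> real \<Rightarrow> real \<Rightarrow> int \<Rightarrow> int pmf" where
  "erws_next p q r \<epsilon> x =
     (if x = 0 then pmf_of_list [(1, \<epsilon> / 2), (-1, \<epsilon> / 2), (0, 1 - \<epsilon>)]
      else pmf_of_list [(x, p), (-x, q), (0, r)])"

fun erws_hist :: "real \<Rightarrow> real \<Rightarrow> real \<Rightarrow> real \<Rightarrow> real \<Rightarrow> nat \<Rightarrow> int list pmf" where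
  "erws_hist p q r \<epsilon> s 0 = return_pmf []"
| "erws_hist p q r \<epsilon> s (Suc 0) = map_pmf (\<lambda>x. [x]) (erws_first s)"
| "erws_hist p q r \<epsilon> s (Suc (Suc n)) =
     bind_pmf (erws_hist p q r \<epsilon> s (Suc n)) (\<lambda>h.
       bind_pmf (pmf_of_set {..<length h}) (\<lambda>k.
         map_pmf (\<lambda>x. h @ [x]) (erws_next p q r \<epsilon> (h ! k))))"

definition erws_second_moment :: "real \<Rightarrow> real \<Rightarrow> real \<Rightarrow> real \<Rightarrow> real \<Rightarrow> nat \<Rightarrow> real" where
  "erws_second_moment p q r \<epsilon> s t =
     measure_pmf.expectation (erws_hist p q r \<epsilon> s t) (\<lambda>h. (real_of_int (sum_list h))^2)"

end

theory Submission
  imports Defs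
begin

text \<open>Conditioning on the history, the next step copies a uniformly chosen earlier move with
  probability \<open>p\<close>, reverses it with probability \<open>q\<close> and stops with probability \<open>r\<close>, while a
  chosen stop is followed by a move with probability \<open>\<epsilon>\<close>. Writing \<open>M\<^sub>t\<close> for the number of
  moves (nonzero steps) this gives the linear recurrences
  \<open>E[M\<^sub>t\<^sub>+\<^sub>1] = (1 + (1 - \<epsilon> - r)/t) E[M\<^sub>t] + \<epsilon>\<close> and
  \<open>E[X\<^sub>t\<^sub>+\<^sub>1\<^sup>2] = (1 + 2\<gamma>/t) E[X\<^sub>t\<^sup>2] + ((1 - \<epsilon> - r)/t) E[M\<^sub>t] + \<epsilon>\<close>.
  The homogeneous equation \<open>x\<^sub>t\<^sub>+\<^sub>1 = (1 + (1 - c)/t) x\<^sub>t\<close> is solved by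
  \<open>\<Gamma>(t + 1 - c)/\<Gamma>(t)\<close>, which grows like \<open>t\<^sup>1\<^sup>-\<^sup>c\<close>; with \<open>2\<gamma> = 1 - \<epsilon>r\<close> both recurrences have such solutions plus a linear
  particular solution, and the linear term dominates.\<close>

section \<open>Gamma ratios and two linear recurrences\<close>

definition Gamma_ratio :: "real \<Rightarrow> real \<Rightarrow> real" where
  "Gamma_ratio c x = Gamma (x + 1 - c) / Gamma x"

lemma Gamma_ratio_one:
  assumes "1 - c \<notin> \<int>\<^sub>\<le>\<^sub>0"
  shows "Gamma_ratio c 1 = (1 - c) * Gamma (1 - c)"
  using Gamma_plus1[OF assms] by (simp add: Gamma_ratio_def add.commute diff_add_eq)

lemma Gamma_ratio_plus1:
  assumes "0 < x" "c < x + 1"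
  shows "Gamma_ratio c (x + 1) = (1 + (1 - c) / x) * Gamma_ratio c x"
proof -
  have "x + 1 - c \<notin> \<int>\<^sub>\<le>\<^sub>0" "x \<notin> \<int>\<^sub>\<le>\<^sub>0"
    using assms by (auto elim!: nonpos_Ints_cases)
  then have "Gamma (x + 1 + 1 - c) = (x + 1 - c) * Gamma (x + 1 - c)" "Gamma (x + 1) = x * Gamma x"
    using Gamma_plus1[of "x + 1 - c"] Gamma_plus1[of x] by (simp_all add: algebra_simps)
  moreover have "Gamma x \<noteq> 0"
    using Gamma_real_pos[OF assms(1)] by simp
  ultimately show ?thesis
    using assms(1) by (simp add: Gamma_ratio_def field_simps)
qed

lemma Gamma_ratio_div_self_tendsto_0:
  assumes "0 < c" "c \<notin> \<nat>"
  shows "(\<lambda>n. Gamma_ratio c (real n) / real n) \<longlonglongrightarrow> 0"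
proof -
  have c: "- c \<notin> \<int>\<^sub>\<le>\<^sub>0"
  proof
    assume "- c \<in> \<int>\<^sub>\<le>\<^sub>0"
    then obtain k where "c = real k"
      by (auto elim!: nonpos_Ints_cases')
    with assms(2) show False
      by simp
  qed
  then have G: "Gamma (- c) \<noteq> 0"
    by (simp add: Gamma_eq_zero_iff)
  have "(\<lambda>n. real n powr (- c) * (Gamma (- c) / Gamma_series (- c) n)) \<longlonglongrightarrow> 0 * (Gamma (- c) / Gamma (- c))"
    using assms(1) G by (intro tendsto_intros tendsto_neg_powr filterlim_real_sequentially) auto
  then have lim: "(\<lambda>n. real n powr (- c) * (Gamma (- c) / Gamma_series (- c) n)) \<longlonglongrightarrow> 0"
    by simp
  show ?thesis
  proof (rule Lim_transform_eventually[OF lim])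
    show "\<forall>\<^sub>F n in sequentially. real n powr (- c) * (Gamma (- c) / Gamma_series (- c) n) =
        Gamma_ratio c (real n) / real n"
      using eventually_gt_at_top[of "0::nat"]
    proof eventually_elim
      case (elim n)
      \<comment> \<open>\<open>\<Gamma>(n+1-c) = (-c)^{(n+1)} \<Gamma>(-c)\<close> turns the Gamma ratio into Euler's product \<open>Gamma_series\<close>.\<close>
      have "Gamma (real n + 1 - c) = pochhammer (- c) (n + 1) * Gamma (- c)"
        using pochhammer_Gamma[OF c, of "n + 1"] G by (simp add: field_simps)
      moreover have "pochhammer (- c) (n + 1) \<noteq> 0"
        using c pochhammer_eq_0_imp_nonpos_Int by blast
      moreover have "Gamma (real n + 1) = real n * Gamma (real n)"
        using elim by (intro Gamma_plus1) (auto elim!: nonpos_Ints_cases)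
      moreover have "Gamma (real n + 1) = fact n"
        using Gamma_fact[of n] by (simp add: add.commute)
      ultimately show ?case
        using elim G by (simp add: Gamma_ratio_def Gamma_series_def powr_def field_simps)
    qed
  qed
qed

lemma Gamma_ratio_expansion_div_self_tendsto:
  assumes "\<forall>\<^sub>F t in sequentially. a t = t / R - A\<^sub>1 * Gamma_ratio c\<^sub>1 t - A\<^sub>2 * Gamma_ratio c\<^sub>2 t"
    and "0 < c\<^sub>1" "c\<^sub>1 \<notin> \<nat>" "0 < c\<^sub>2" "c\<^sub>2 \<notin> \<nat>"
  shows "(\<lambda>t. a t / t) \<longlonglongrightarrow> 1 / R"
proof -
  have "(\<lambda>t. 1 / R - A\<^sub>1 * (Gamma_ratio c\<^sub>1 t / t) - A\<^sub>2 * (Gamma_ratio c\<^sub>2 t / t)) \<longlonglongrightarrow> 1 / R - A\<^sub>1 * 0 - A\<^sub>2 * 0"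
    using assms(2-5) by (intro tendsto_intros Gamma_ratio_div_self_tendsto_0)
  moreover have "\<forall>\<^sub>F t in sequentially.
      1 / R - A\<^sub>1 * (Gamma_ratio c\<^sub>1 t / t) - A\<^sub>2 * (Gamma_ratio c\<^sub>2 t / t) = a t / t"
    using assms(1) eventually_gt_at_top[of "0::nat"]
    by eventually_elim (simp add: diff_divide_distrib)
  ultimately show ?thesis
    by (simp add: Lim_transform_eventually)
qed

lemma Gamma_ratio_Suc:
  assumes "1 \<le> t" "c < 2"
  shows "Gamma_ratio c (real (Suc t)) = (1 + (1 - c) / real t) * Gamma_ratio c (real t)"
  using Gamma_ratio_plus1[of "real t" c] assms by (simp add: add.commute)

lemma not_nonpos_Int_if_gt_minus_one:
  fixes z :: real
  assumes "-1 < z" "z \<noteq> 0"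
  shows "z \<notin> \<int>\<^sub>\<le>\<^sub>0"
  using assms by (auto elim!: nonpos_Ints_cases)

lemma moves_recurrence_solution:
  fixes m :: "nat \<Rightarrow> real" and \<epsilon> r :: real
  assumes "0 < \<epsilon>" "0 < r" "\<epsilon> + r < 2" "\<epsilon> + r \<noteq> 1"
    and m_one: "m 1 = 1"
    and m_Suc: "\<And>t. 1 \<le> t \<Longrightarrow> m (Suc t) = (1 + (1 - \<epsilon> - r) / t) * m t + \<epsilon>"
    and "1 \<le> t"
  shows "m t = \<epsilon> * t / (\<epsilon> + r)
    + r / ((\<epsilon> + r) * (1 - \<epsilon> - r) * Gamma (1 - \<epsilon> - r)) * Gamma_ratio (\<epsilon> + r) t"
proof -
  define K where "K = r / ((\<epsilon> + r) * (1 - \<epsilon> - r) * Gamma (1 - \<epsilon> - r))"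
  have "m t = \<epsilon> * t / (\<epsilon> + r) + K * Gamma_ratio (\<epsilon> + r) t"
    using \<open>1 \<le> t\<close>
  proof (induction t rule: nat_induct_at_least)
    case base
    have "1 - (\<epsilon> + r) \<notin> \<int>\<^sub>\<le>\<^sub>0"
      using assms(1-4) by (intro not_nonpos_Int_if_gt_minus_one) auto
    then have "Gamma_ratio (\<epsilon> + r) (real 1) = (1 - \<epsilon> - r) * Gamma (1 - \<epsilon> - r)"
      "Gamma (1 - \<epsilon> - r) \<noteq> 0"
      by (simp_all add: Gamma_ratio_one Gamma_eq_zero_iff diff_diff_eq)
    moreover have "\<epsilon> + r \<noteq> 0" "1 - \<epsilon> - r \<noteq> 0"
      using assms(1-4) by auto
    ultimately show ?case
      using m_one by (simp only: K_def) (simp add: divide_simps)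
  next
    case (Suc t)
    let ?\<rho> = "Gamma_ratio (\<epsilon> + r)"
    have "m (Suc t) = (1 + (1 - (\<epsilon> + r)) / t) * (\<epsilon> * t / (\<epsilon> + r) + K * ?\<rho> t) + \<epsilon>"
      using Suc by (simp add: m_Suc diff_diff_eq)
    also have "\<dots> = \<epsilon> * Suc t / (\<epsilon> + r) + K * ((1 + (1 - (\<epsilon> + r)) / t) * ?\<rho> t)"
      using Suc.hyps assms(1,2) by (simp add: divide_simps) (simp add: algebra_simps)
    also have "(1 + (1 - (\<epsilon> + r)) / t) * ?\<rho> t = ?\<rho> (Suc t)"
      using Suc.hyps assms(3) by (rule Gamma_ratio_Suc[symmetric])
    finally show ?case .
  qed
  then show ?thesis
    by (simp only: K_def)
qed

lemma second_moment_recurrence_solution: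
  fixes a m :: "nat \<Rightarrow> real" and \<epsilon> r :: real
  assumes "0 < \<epsilon>" "\<epsilon> < 1" "0 < r" "r < 1" "\<epsilon> + r \<noteq> 1"
    and a_one: "a 1 = 1"
    and m_closed: "\<And>t. 1 \<le> t \<Longrightarrow> m t = \<epsilon> * t / (\<epsilon> + r)
      + r / ((\<epsilon> + r) * (1 - \<epsilon> - r) * Gamma (1 - \<epsilon> - r)) * Gamma_ratio (\<epsilon> + r) t"
    and a_Suc: "\<And>t. 1 \<le> t \<Longrightarrow>
      a (Suc t) = (1 + (1 - \<epsilon> * r) / t) * a t + ((1 - \<epsilon> - r) / t) * m t + \<epsilon>"
    and "1 \<le> t"
  shows "a t = t / (r * (\<epsilon> + r))
    - r / ((\<epsilon> + r) * (\<epsilon> + r - \<epsilon> * r) * Gamma (1 - \<epsilon> - r)) * Gamma_ratio (\<epsilon> + r) t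
    - (1 / Gamma (1 - \<epsilon> * r)) * (1 / (r * (\<epsilon> + r)) - r / ((\<epsilon> + r) * (\<epsilon> + r - \<epsilon> * r)))
      * Gamma_ratio (\<epsilon> * r) t"
proof -
  define A1 where "A1 = r / ((\<epsilon> + r) * (\<epsilon> + r - \<epsilon> * r) * Gamma (1 - \<epsilon> - r))"
  define A2 where
    "A2 = (1 / Gamma (1 - \<epsilon> * r)) * (1 / (r * (\<epsilon> + r)) - r / ((\<epsilon> + r) * (\<epsilon> + r - \<epsilon> * r)))"
  define K where "K = r / ((\<epsilon> + r) * (1 - \<epsilon> - r) * Gamma (1 - \<epsilon> - r))"
  let ?\<rho>\<^sub>1 = "Gamma_ratio (\<epsilon> + r)" and ?\<rho>\<^sub>2 = "Gamma_ratio (\<epsilon> * r)"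
  have "\<epsilon> * r < r"
    using assms(1-4) by simp
  then have nz: "r \<noteq> 0" "\<epsilon> + r \<noteq> 0" "1 - \<epsilon> - r \<noteq> 0" "\<epsilon> + r - \<epsilon> * r \<noteq> 0"
    and "\<epsilon> * r < 2" "\<epsilon> * r < 1"
    using assms(1-5) by linarith+
  have "1 - (\<epsilon> + r) \<notin> \<int>\<^sub>\<le>\<^sub>0" "1 - \<epsilon> * r \<notin> \<int>\<^sub>\<le>\<^sub>0"
    using assms(1-5) \<open>\<epsilon> * r < 1\<close> by (intro not_nonpos_Int_if_gt_minus_one; auto)+
  then have \<rho>_one: "?\<rho>\<^sub>1 (real 1) = (1 - \<epsilon> - r) * Gamma (1 - \<epsilon> - r)"
      "?\<rho>\<^sub>2 (real 1) = (1 - \<epsilon> * r) * Gamma (1 - \<epsilon> * r)"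
    and G_nz: "Gamma (1 - \<epsilon> - r) \<noteq> 0" "Gamma (1 - \<epsilon> * r) \<noteq> 0"
    by (simp_all add: Gamma_ratio_one Gamma_eq_zero_iff diff_diff_eq)
  have "a t = t / (r * (\<epsilon> + r)) - A1 * ?\<rho>\<^sub>1 t - A2 * ?\<rho>\<^sub>2 t"
    using \<open>1 \<le> t\<close>
  proof (induction t rule: nat_induct_at_least)
    case base
    show ?case
      using a_one nz G_nz by (simp only: \<rho>_one A1_def A2_def) (simp add: divide_simps, simp add: algebra_simps)
  next
    case (Suc t)
    have "a (Suc t) = (1 + (1 - \<epsilon> * r) / t) * (t / (r * (\<epsilon> + r)) - A1 * ?\<rho>\<^sub>1 t - A2 * ?\<rho>\<^sub>2 t)
        + ((1 - \<epsilon> - r) / t) * (\<epsilon> * t / (\<epsilon> + r) + K * ?\<rho>\<^sub>1 t) + \<epsilon>"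
      using Suc by (simp add: a_Suc m_closed K_def)
    also have "\<dots> = Suc t / (r * (\<epsilon> + r)) - A1 * ((1 + (1 - (\<epsilon> + r)) / t) * ?\<rho>\<^sub>1 t)
        - A2 * ((1 + (1 - \<epsilon> * r) / t) * ?\<rho>\<^sub>2 t)"
      using Suc.hyps nz G_nz unfolding A1_def K_def by (simp add: divide_simps) (simp add: algebra_simps)
    also have "(1 + (1 - (\<epsilon> + r)) / t) * ?\<rho>\<^sub>1 t = ?\<rho>\<^sub>1 (Suc t)"
      using Suc.hyps assms(1-4) by (intro Gamma_ratio_Suc[symmetric]) auto
    also have "(1 + (1 - \<epsilon> * r) / t) * ?\<rho>\<^sub>2 t = ?\<rho>\<^sub>2 (Suc t)"
      using Suc.hyps \<open>\<epsilon> * r < 2\<close> by (rule Gamma_ratio_Suc[symmetric])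
    finally show ?case .
  qed
  then show ?thesis
    by (simp only: A1_def A2_def)
qed

section \<open>Moment recurrences of the walk\<close>

definition position :: "int list \<Rightarrow> real" where
  "position h = real_of_int (sum_list h)"

definition moves :: "int list \<Rightarrow> real" where
  "moves h = (\<Sum>y\<leftarrow>h. if y = 0 then 0 else 1)"

definition ternary_lists :: "nat \<Rightarrow> int list set" where
  "ternary_lists t = {h. set h \<subseteq> {-1, 0, 1} \<and> length h = t}"

lemma finite_ternary_lists: "finite (ternary_lists t)"
  unfolding ternary_lists_def by (rule finite_lists_length_eq) simp

lemma sum_lessThan_nth: "(\<Sum>k<length h. f (h ! k)) = (\<Sum>y\<leftarrow>h. f y)"
  by (simp add: sum_list_sum_nth atLeast0LessThan)

lemma sum_list_zero_indicator:
  fixes a b :: real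
  shows "(\<Sum>y\<leftarrow>h. if y = 0 then a else b) = a * length h + (b - a) * moves h"
  by (induction h) (auto simp: moves_def algebra_simps)

lemma expectation_pmf_of_list:
  fixes f :: "'a \<Rightarrow> real"
  assumes wf: "pmf_of_list_wf xs" and dist: "distinct (map fst xs)"
  shows "measure_pmf.expectation (pmf_of_list xs) f = (\<Sum>(x, w)\<leftarrow>xs. w * f x)"
proof -
  have pmf_fst: "pmf (pmf_of_list xs) (fst z) = snd z" if "z \<in> set xs" for z
  proof -
    have "filter (\<lambda>z'. fst z' = fst z) xs = [z]"
      using dist that by (induction xs) (auto simp: filter_empty_conv rev_image_eqI)
    thus ?thesis by (simp add: pmf_pmf_of_list[OF wf])
  qed
  have "measure_pmf.expectation (pmf_of_list xs) f = (\<Sum>x\<in>set (map fst xs). pmf (pmf_of_list xs) x * f x)"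
    using set_pmf_of_list[OF wf] by (subst integral_measure_pmf) auto
  also have "\<dots> = (\<Sum>x\<leftarrow>map fst xs. pmf (pmf_of_list xs) x * f x)"
    using dist by (rule sum.distinct_set_conv_list)
  also have "\<dots> = (\<Sum>(x, w)\<leftarrow>xs. w * f x)"
    by (simp add: o_def case_prod_beta pmf_fst cong: map_cong)
  finally show ?thesis .
qed

lemma expectation_affine_finite:
  fixes f g :: "'a \<Rightarrow> real"
  assumes "finite (set_pmf M)"
  shows "measure_pmf.expectation M (\<lambda>x. a * f x + b * g x + c)
    = a * measure_pmf.expectation M f + b * measure_pmf.expectation M g + c"
proof -
  have int: "integrable M h" for h :: "'a \<Rightarrow> real"
    using assms by (rule integrable_measure_pmf_finite)
  have "measure_pmf.expectation M (\<lambda>x. a * f x + b * g x + c)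
      = measure_pmf.expectation M (\<lambda>x. a * f x) + measure_pmf.expectation M (\<lambda>x. b * g x)
        + measure_pmf.expectation M (\<lambda>x. c)"
    by (simp add: int Bochner_Integration.integral_add)
  then show ?thesis
    by (simp add: measure_pmf.prob_space_axioms prob_space.prob_space)
qed

locale erws_parameters =
  fixes p q r \<epsilon> s :: real
  assumes p_nonneg: "0 \<le> p" and q_nonneg: "0 \<le> q" and r_nonneg: "0 \<le> r"
    and pqr_sum: "p + q + r = 1"
    and eps_nonneg: "0 \<le> \<epsilon>" and eps_le_one: "\<epsilon> \<le> 1"
    and s_nonneg: "0 \<le> s" and s_le_one: "s \<le> 1"
begin

abbreviation "hist \<equiv> erws_hist p q r \<epsilon> s"
abbreviation "step \<equiv> erws_next p q r \<epsilon>"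

lemma wf_first: "pmf_of_list_wf [(1::int, s), (-1, 1 - s)]"
  using s_nonneg s_le_one by (auto simp: pmf_of_list_wf_def)

lemma wf_step_list:
  "pmf_of_list_wf [(1::int, \<epsilon> / 2), (-1, \<epsilon> / 2), (0, 1 - \<epsilon>)]"
  "pmf_of_list_wf [(x::int, p), (-x, q), (0, r)]"
  using p_nonneg q_nonneg r_nonneg pqr_sum eps_nonneg eps_le_one
  by (auto simp: pmf_of_list_wf_def add.assoc)

lemma expectation_step:
  "measure_pmf.expectation (step y) f =
    (if y = 0 then \<epsilon> / 2 * f 1 + \<epsilon> / 2 * f (-1) + (1 - \<epsilon>) * f 0
     else p * f y + q * f (-y) + r * f 0)"
  using expectation_pmf_of_list[OF wf_step_list(1)] expectation_pmf_of_list[OF wf_step_list(2)]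
  by (simp add: erws_next_def)

lemma set_pmf_step: "y \<in> {-1, 0, 1} \<Longrightarrow> set_pmf (step y) \<subseteq> {-1, 0, 1}"
  using set_pmf_of_list[OF wf_step_list(1)] set_pmf_of_list[OF wf_step_list(2), of y]
  by (auto simp: erws_next_def split: if_splits)

lemma hist_Suc:
  assumes "1 \<le> t"
  shows "hist (Suc t) = hist t \<bind> (\<lambda>h. pmf_of_set {..<length h} \<bind> (\<lambda>k.
    map_pmf (\<lambda>x. h @ [x]) (step (h ! k))))"
  using assms by (cases t) auto

lemma set_pmf_hist: "set_pmf (hist t) \<subseteq> ternary_lists t"
proof (cases "t = 0")
  case True
  then show ?thesis
    by (simp add: ternary_lists_def)
next
  case False
  then have "1 \<le> t"
    by simp
  then show ?thesis
  proof (induction t rule: nat_induct_at_least)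
    case base
    show ?case
      using set_pmf_of_list[OF wf_first] s_nonneg s_le_one
      by (auto simp: ternary_lists_def erws_first_def)
  next
    case (Suc t)
    show ?case
    proof
      fix h' assume "h' \<in> set_pmf (hist (Suc t))"
      then obtain h k x where h: "h \<in> set_pmf (hist t)" and k: "k \<in> set_pmf (pmf_of_set {..<length h})"
        and x: "x \<in> set_pmf (step (h ! k))" and h': "h' = h @ [x]"
        by (auto simp: hist_Suc[OF Suc.hyps])
      have "h \<in> ternary_lists t"
        using h Suc.IH by blast
      moreover from this have "k < length h"
        using k Suc.hyps by (auto simp: ternary_lists_def lessThan_empty_iff)
      ultimately have "h ! k \<in> {-1, 0, 1}"
        using nth_mem by (fastforce simp: ternary_lists_def)
      then have "x \<in> {-1, 0, 1}"
        using x set_pmf_step by blast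
      with \<open>h \<in> ternary_lists t\<close> show "h' \<in> ternary_lists (Suc t)"
        by (auto simp: h' ternary_lists_def)
    qed
  qed
qed

lemma finite_set_pmf_step: "finite (set_pmf (step y))"
  using finite_set_pmf_of_list[OF wf_step_list(1)] finite_set_pmf_of_list[OF wf_step_list(2)]
  by (simp add: erws_next_def)

lemma expectation_hist_Suc:
  fixes g G :: "int list \<Rightarrow> real"
  assumes "1 \<le> t"
    and one_step: "\<And>h. h \<in> ternary_lists t \<Longrightarrow>
      (\<Sum>k<t. measure_pmf.expectation (step (h ! k)) (\<lambda>x. g (h @ [x]))) = t * G h"
  shows "measure_pmf.expectation (hist (Suc t)) g = measure_pmf.expectation (hist t) G"
proof -
  let ?next = "\<lambda>h. pmf_of_set {..<length h} \<bind> (\<lambda>k. map_pmf (\<lambda>x. h @ [x]) (step (h ! k)))"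
  have next_exp: "measure_pmf.expectation (?next h) g = G h" if "h \<in> ternary_lists t" for h
  proof -
    have "length h = t" "{..<length h} \<noteq> {}"
      using that assms(1) by (auto simp: ternary_lists_def lessThan_empty_iff)
    then have "measure_pmf.expectation (?next h) g
        = (\<Sum>k<t. measure_pmf.expectation (step (h ! k)) (\<lambda>x. g (h @ [x]))) / t"
      using finite_set_pmf_step
      by (subst pmf_expectation_bind_pmf_of_set) (auto simp: sum_divide_distrib divide_inverse_commute sum_distrib_left)
    then show ?thesis
      using one_step[OF that] assms(1) by simp
  qed
  have "measure_pmf.expectation (hist (Suc t)) g
      = (\<Sum>h\<in>ternary_lists t. pmf (hist t) h * measure_pmf.expectation (?next h) g)"
    unfolding hist_Suc[OF assms(1)] using finite_set_pmf_step assms(1)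
    by (subst pmf_expectation_bind[OF finite_ternary_lists _ set_pmf_hist])
      (auto simp: lessThan_empty_iff ternary_lists_def)
  also have "\<dots> = (\<Sum>h\<in>ternary_lists t. pmf (hist t) h * G h)"
    by (simp add: next_exp)
  also have "\<dots> = measure_pmf.expectation (hist t) G"
    using set_pmf_hist by (subst integral_measure_pmf[OF finite_ternary_lists]) auto
  finally show ?thesis .
qed

lemma finite_set_pmf_hist: "finite (set_pmf (hist t))"
  using set_pmf_hist finite_ternary_lists by (rule finite_subset)

lemma expectation_step_shifted_square:
  assumes "y \<in> {-1, 0, 1}"
  shows "measure_pmf.expectation (step y) (\<lambda>x. (P + real_of_int x) ^ 2)
    = P ^ 2 + 2 * (p - q) * P * y + (if y = 0 then \<epsilon> else 1 - r)"
proof -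
  have r: "r = 1 - p - q"
    using pqr_sum by simp
  show ?thesis
    unfolding expectation_step using assms
    by (auto simp: power2_eq_square algebra_simps r add_divide_distrib)
qed

lemma expectation_step_moves:
  "measure_pmf.expectation (step y) (\<lambda>x. M + (if x = 0 then 0 else 1))
    = M + (if y = 0 then \<epsilon> else 1 - r)"
proof -
  have r: "r = 1 - p - q"
    using pqr_sum by simp
  show ?thesis
    unfolding expectation_step by (auto simp: algebra_simps r)
qed

lemma sum_step_position_square:
  assumes "h \<in> ternary_lists t"
  shows "(\<Sum>k<t. measure_pmf.expectation (step (h ! k)) (\<lambda>x. position (h @ [x]) ^ 2))
    = t * (position h) ^ 2 + 2 * (p - q) * (position h) ^ 2 + \<epsilon> * t + (1 - \<epsilon> - r) * moves h"
proof -
  let ?P = "position h"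
  have h: "length h = t" "set h \<subseteq> {-1, 0, 1}"
    using assms by (auto simp: ternary_lists_def)
  have "(\<Sum>k<t. measure_pmf.expectation (step (h ! k)) (\<lambda>x. position (h @ [x]) ^ 2))
      = (\<Sum>k<t. ?P ^ 2 + 2 * (p - q) * ?P * (h ! k) + (if h ! k = 0 then \<epsilon> else 1 - r))"
  proof (rule sum.cong[OF refl])
    fix k assume "k \<in> {..<t}"
    then have "h ! k \<in> {-1, 0, 1}"
      using h nth_mem by fastforce
    then show "measure_pmf.expectation (step (h ! k)) (\<lambda>x. position (h @ [x]) ^ 2)
        = ?P ^ 2 + 2 * (p - q) * ?P * (h ! k) + (if h ! k = 0 then \<epsilon> else 1 - r)"
      unfolding position_def by (simp add: expectation_step_shifted_square)
  qed
  also have "\<dots> = (\<Sum>y\<leftarrow>h. ?P ^ 2 + 2 * (p - q) * ?P * real_of_int y + (if y = 0 then \<epsilon> else 1 - r))"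
    unfolding h(1)[symmetric] by (rule sum_lessThan_nth)
  also have "\<dots> = t * ?P ^ 2 + 2 * (p - q) * ?P * ?P + \<epsilon> * t + (1 - \<epsilon> - r) * moves h"
    by (simp add: sum_list_addf sum_list_triv sum_list_const_mult sum_list_zero_indicator h(1)
        position_def sum_list_of_int[symmetric])
  finally show ?thesis
    by (simp add: power2_eq_square)
qed

lemma sum_step_moves:
  assumes "h \<in> ternary_lists t"
  shows "(\<Sum>k<t. measure_pmf.expectation (step (h ! k)) (\<lambda>x. moves (h @ [x])))
    = t * moves h + \<epsilon> * t + (1 - \<epsilon> - r) * moves h"
proof -
  have h: "length h = t"
    using assms by (simp add: ternary_lists_def)
  have "(\<Sum>k<t. measure_pmf.expectation (step (h ! k)) (\<lambda>x. moves (h @ [x])))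
      = (\<Sum>y\<leftarrow>h. moves h + (if y = 0 then \<epsilon> else 1 - r))"
    unfolding h[symmetric] sum_lessThan_nth[symmetric]
    by (intro sum.cong refl) (simp add: moves_def expectation_step_moves)
  also have "\<dots> = t * moves h + \<epsilon> * t + (1 - \<epsilon> - r) * moves h"
    by (simp add: sum_list_addf sum_list_triv sum_list_zero_indicator h)
  finally show ?thesis .
qed

lemma second_moment_Suc:
  assumes "1 \<le> t"
  shows "measure_pmf.expectation (hist (Suc t)) (\<lambda>h. position h ^ 2)
    = (1 + 2 * (p - q) / t) * measure_pmf.expectation (hist t) (\<lambda>h. position h ^ 2)
      + ((1 - \<epsilon> - r) / t) * measure_pmf.expectation (hist t) moves + \<epsilon>"
proof -
  have "measure_pmf.expectation (hist (Suc t)) (\<lambda>h. position h ^ 2)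
      = measure_pmf.expectation (hist t)
          (\<lambda>h. (1 + 2 * (p - q) / t) * position h ^ 2 + ((1 - \<epsilon> - r) / t) * moves h + \<epsilon>)"
    using assms by (intro expectation_hist_Suc) (simp_all add: sum_step_position_square field_simps)
  also have "\<dots> = (1 + 2 * (p - q) / t) * measure_pmf.expectation (hist t) (\<lambda>h. position h ^ 2)
      + ((1 - \<epsilon> - r) / t) * measure_pmf.expectation (hist t) moves + \<epsilon>"
    by (rule expectation_affine_finite[OF finite_set_pmf_hist])
  finally show ?thesis .
qed

lemma moves_mean_Suc:
  assumes "1 \<le> t"
  shows "measure_pmf.expectation (hist (Suc t)) moves
    = (1 + (1 - \<epsilon> - r) / t) * measure_pmf.expectation (hist t) moves + \<epsilon>"
proof -
  have "measure_pmf.expectation (hist (Suc t)) moves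
      = measure_pmf.expectation (hist t) (\<lambda>h. 0 * position h ^ 2 + (1 + (1 - \<epsilon> - r) / t) * moves h + \<epsilon>)"
    using assms by (intro expectation_hist_Suc) (simp_all add: sum_step_moves field_simps)
  then show ?thesis
    by (simp only: expectation_affine_finite[OF finite_set_pmf_hist])
qed

lemma second_moment_one: "measure_pmf.expectation (hist 1) (\<lambda>h. position h ^ 2) = 1"
  using expectation_pmf_of_list[OF wf_first] by (simp add: erws_first_def position_def)

lemma moves_mean_one: "measure_pmf.expectation (hist 1) moves = 1"
  using expectation_pmf_of_list[OF wf_first] by (simp add: erws_first_def moves_def)

end

theorem mainTheorem8:
  fixes p q r \<epsilon> s :: real
  assumes "0 < p" "p < 1" "0 < q" "q < 1" "0 < r" "r < 1" "p + q + r = 1"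
    and "0 < \<epsilon>" "\<epsilon> < 1" "0 < s" "s < 1"
    and "\<epsilon> + r \<noteq> 1"
    and "p - q = (1 - \<epsilon> * r) / 2"
  shows "(\<forall>t::nat. t \<ge> 1 \<longrightarrow>
           erws_second_moment p q r \<epsilon> s t =
             real t / (r * (\<epsilon> + r))
             - r * Gamma (real t + 1 - \<epsilon> - r)
               / ((\<epsilon> + r) * (\<epsilon> + r - \<epsilon> * r) * Gamma (1 - \<epsilon> - r) * Gamma (real t))
             - (1 / Gamma (1 - \<epsilon> * r))
               * (1 / (r * (\<epsilon> + r)) - r / ((\<epsilon> + r) * (\<epsilon> + r - \<epsilon> * r)))
               * (Gamma (real t + 1 - \<epsilon> * r) / Gamma (real t)))
         \<and> ((\<lambda>t. erws_second_moment p q r \<epsilon> s t / real t)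
              \<longlonglongrightarrow> 1 / (r * (\<epsilon> + r)))"
proof -
  interpret erws_parameters p q r \<epsilon> s
    using assms by unfold_locales auto
  define A1 where "A1 = r / ((\<epsilon> + r) * (\<epsilon> + r - \<epsilon> * r) * Gamma (1 - \<epsilon> - r))"
  define A2 where
    "A2 = (1 / Gamma (1 - \<epsilon> * r)) * (1 / (r * (\<epsilon> + r)) - r / ((\<epsilon> + r) * (\<epsilon> + r - \<epsilon> * r)))"
  let ?a = "erws_second_moment p q r \<epsilon> s" and ?m = "\<lambda>t. measure_pmf.expectation (hist t) moves"
  have a: "?a t = measure_pmf.expectation (hist t) (\<lambda>h. position h ^ 2)" for t
    by (simp add: erws_second_moment_def position_def)
  have "\<epsilon> + r < 2" "\<epsilon> * r < 1" "2 * (p - q) = 1 - \<epsilon> * r"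
    using mult_strict_mono[of \<epsilon> 1 r 1] assms by simp_all
  have m_closed: "?m t = \<epsilon> * t / (\<epsilon> + r)
      + r / ((\<epsilon> + r) * (1 - \<epsilon> - r) * Gamma (1 - \<epsilon> - r)) * Gamma_ratio (\<epsilon> + r) t" if "1 \<le> t" for t
    using assms(8,5) \<open>\<epsilon> + r < 2\<close> assms(12) moves_mean_one moves_mean_Suc that
    by (rule moves_recurrence_solution)
  have closed: "?a t = t / (r * (\<epsilon> + r)) - A1 * Gamma_ratio (\<epsilon> + r) t - A2 * Gamma_ratio (\<epsilon> * r) t"
    if "1 \<le> t" for t
    unfolding A1_def A2_def a
    using assms(8,9,5,6,12) second_moment_one m_closed second_moment_Suc[unfolded \<open>2 * (p - q) = _\<close>] that
    by (rule second_moment_recurrence_solution)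
  have "\<forall>\<^sub>F t in sequentially.
      ?a t = t / (r * (\<epsilon> + r)) - A1 * Gamma_ratio (\<epsilon> + r) t - A2 * Gamma_ratio (\<epsilon> * r) t"
    using eventually_ge_at_top[of 1] by eventually_elim (rule closed)
  then have "(\<lambda>t. ?a t / t) \<longlonglongrightarrow> 1 / (r * (\<epsilon> + r))"
    by (rule Gamma_ratio_expansion_div_self_tendsto)
      (use assms(5,8,12) \<open>\<epsilon> + r < 2\<close> \<open>\<epsilon> * r < 1\<close> in \<open>auto elim!: Nats_cases\<close>)
  with closed show ?thesis
    by (simp add: A1_def A2_def Gamma_ratio_def diff_diff_eq)
qed

end
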